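(* Let $n\ge 2$, $\rho>0$ and $\omega\in S^{n-1}$. Let $P(\tau,\xi) = -\tau^2 + \xi\cdot\xi + i\tau\,\xi\cdot\xi$ for $(\tau,\xi)\in\mathbb{C}\times\mathbb{C}^n$, $\zeta^o = (-i\rho^2, i\rho\omega)$, $P_o(\zeta) = P(\zeta+\zeta^o)$ and $N = (1,0,\ldots,0)\in\mathbb{R}\times\mathbb{R}^n$. Suppose $\sigma(\zeta)$ is a solution of $P_o(\zeta+\sigma N) = 0$, $\zeta = (\tau,\xi)\in\mathbb{C}\times\mathbb{C}^n$, which is analytic and single-valued in a ball $B\subset\mathbb{C}\times\mathbb{C}^n$ with real center and radius $1$. Then $\sup_{\zeta\in B}\operatorname{Im}\sigma(\zeta)\ge 0$. *)

theory Defs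
  imports "HOL-Analysis.Analysis"
begin

text \<open>Points of C x C^n are pairs (tau, xi) with xi :: complex^'n.
  The bilinear (non-conjugated) dot product xi . xi.\<close>
definition cdot :: "complex^'n \<Rightarrow> complex^'n \<Rightarrow> complex" where
  "cdot x y = (\<Sum>i\<in>UNIV. x $ i * y $ i)"

definition Psym :: "complex \<Rightarrow> complex^'n \<Rightarrow> complex" where
  "Psym t x = - (t ^ 2) + cdot x x + \<i> * t * cdot x x"

definition zeta_o :: "real \<Rightarrow> real^'n \<Rightarrow> complex \<times> (complex^'n)" where
  "zeta_o \<rho> \<omega> = (- \<i> * of_real (\<rho>^2), \<chi> j. \<i> * of_real \<rho> * of_real (\<omega> $ j))"

definition P_o :: "real \<Rightarrow> real^'n \<Rightarrow> complex \<times> (complex^'n) \<Rightarrow> complex" where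
  "P_o \<rho> \<omega> z = (let w = z + zeta_o \<rho> \<omega> in Psym (fst w) (snd w))"

definition Nvec :: "complex \<times> (complex^'n)" where
  "Nvec = (1, 0)"

definition cscale :: "complex \<Rightarrow> complex \<times> (complex^'n) \<Rightarrow> complex \<times> (complex^'n)" where
  "cscale c z = (c * fst z, c *s snd z)"

text \<open>Holomorphic (complex analytic) function of several complex variables on an
  open set: complex Frechet differentiable at every point (Osgood/Hartogs:
  equivalent to analyticity on open sets).\<close>
definition holomorphic_several :: "(complex \<times> (complex^'n) \<Rightarrow> complex) \<Rightarrow> (complex \<times> (complex^'n)) set \<Rightarrow> bool" where
  "holomorphic_several f S \<longleftrightarrow>
     (\<forall>z\<in>S. \<exists>L. (f has_derivative L) (at z) \<and> (\<forall>v. L (cscale \<i> v) = \<i> * L v))"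

definition real_point :: "complex \<times> (complex^'n) \<Rightarrow> bool" where
  "real_point z \<longleftrightarrow> Im (fst z) = 0 \<and> (\<forall>j. Im (snd z $ j) = 0)"

end

theory Submission
  imports Defs
begin

text \<open>Writing \<open>w = 1 + i\<tau>\<close>, a root of \<open>P(\<tau>,\<xi>) = -\<tau>\<^sup>2 + (1 + i\<tau>) \<xi>\<cdot>\<xi>\<close> satisfies
  \<open>\<xi>\<cdot>\<xi> = 2 - w - 1/w\<close>, so \<open>Re (\<xi>\<cdot>\<xi>) \<le> 1 + Im \<tau>\<close> whenever \<open>Re w = 1 - Im \<tau> \<ge> 0\<close>.
  Shifting by \<open>\<zeta>\<^sup>o\<close>, at a point whose \<open>\<xi>\<close>-part is real this gives
  \<open>Im \<sigma> \<ge> -Im \<tau> - 1\<close>. Evaluating at \<open>c - (it, 0)\<close> with \<open>t \<rightarrow> 1\<close> shows that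
  \<open>Im \<sigma>\<close> comes arbitrarily close to \<open>0\<close> from below on the ball. The bound holds for
  every solution \<open>\<sigma>\<close>.\<close>

lemma Psym_root_Re_cdot_le:
  assumes root: "Psym t x = 0" and "Im t \<le> 1"
  shows "Re (cdot x x) \<le> Im t + 1"
proof -
  define Q where "Q = cdot x x"
  define w where "w = 1 + \<i> * t"
  have root': "Q * w = - ((1 - w)\<^sup>2)"
    using root unfolding Psym_def Q_def w_def by (simp add: algebra_simps power2_eq_square)
  have "w \<noteq> 0"
  proof
    assume "w = 0"
    with root' show False by simp
  qed
  with root' have "Q = 2 - w - inverse w"
    by (simp add: field_simps power2_eq_square)
  then have "Re Q = 2 - Re w - Re w / (cmod w)\<^sup>2"
    by (simp add: cmod_power2)
  moreover have "Re w = 1 - Im t"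
    unfolding w_def by simp
  ultimately show ?thesis
    using \<open>Im t \<le> 1\<close> unfolding Q_def by (simp add: divide_nonneg_nonneg)
qed

lemma Re_cdot_self_ge:
  fixes y :: "complex^'n"
  shows "Re (cdot y y) \<ge> - (\<Sum>j\<in>UNIV. (Im (y $ j))\<^sup>2)"
proof -
  have "Re (cdot y y) = (\<Sum>j\<in>UNIV. (Re (y $ j))\<^sup>2) - (\<Sum>j\<in>UNIV. (Im (y $ j))\<^sup>2)"
    unfolding cdot_def by (simp add: power2_eq_square sum_subtractf)
  then show ?thesis
    by (simp add: sum_nonneg)
qed

lemma P_o_shift_eq:
  "P_o \<rho> \<omega> ((\<tau>, \<xi>) + cscale s Nvec)
     = Psym (\<tau> + s - \<i> * of_real (\<rho>\<^sup>2)) (\<xi> + (\<chi> j. \<i> * of_real \<rho> * of_real (\<omega> $ j)))"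
  unfolding P_o_def zeta_o_def cscale_def Nvec_def by (simp add: Let_def)

lemma P_o_root_Im_ge:
  fixes \<omega> :: "real^'n" and \<xi> :: "complex^'n"
  assumes "norm \<omega> = 1" and real_\<xi>: "\<forall>j. Im (\<xi> $ j) = 0"
    and root: "P_o \<rho> \<omega> ((\<tau>, \<xi>) + cscale s Nvec) = 0"
  shows "Im s \<ge> - Im \<tau> - 1"
proof -
  define t where "t = \<tau> + s - \<i> * of_real (\<rho>\<^sup>2)"
  define y where "y = \<xi> + (\<chi> j. \<i> * of_real \<rho> * of_real (\<omega> $ j))"
  have "(\<Sum>j\<in>UNIV. (Im (y $ j))\<^sup>2) = \<rho>\<^sup>2 * (\<Sum>j\<in>UNIV. (\<omega> $ j)\<^sup>2)"
    unfolding y_def using real_\<xi> by (simp add: power_mult_distrib sum_distrib_left)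
  also have "(\<Sum>j\<in>UNIV. (\<omega> $ j)\<^sup>2) = 1"
    using \<open>norm \<omega> = 1\<close> by (simp add: norm_vec_def L2_set_def)
  finally have "Re (cdot y y) \<ge> - (\<rho>\<^sup>2)"
    using Re_cdot_self_ge[of y] by simp
  moreover have "Psym t y = 0"
    using root unfolding P_o_shift_eq t_def y_def .
  ultimately have "Im t \<ge> - (\<rho>\<^sup>2) - 1"
    using Psym_root_Re_cdot_le[of t y] zero_le_power2[of \<rho>] by (cases "Im t \<le> 1") linarith+
  then show ?thesis
    unfolding t_def by simp
qed

theorem lemma1:
  fixes \<rho> :: real and \<omega> :: "real^'n" and c :: "complex \<times> (complex^'n)"
    and \<sigma> :: "complex \<times> (complex^'n) \<Rightarrow> complex"
  assumes "CARD('n) \<ge> 2"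
    and "\<rho> > 0"
    and "norm \<omega> = 1"
    and "real_point c"
    and "holomorphic_several \<sigma> (ball c 1)"
    and "\<forall>z\<in>ball c 1. P_o \<rho> \<omega> (z + cscale (\<sigma> z) Nvec) = 0"
  shows "(SUP z\<in>ball c 1. ereal (Im (\<sigma> z))) \<ge> 0"
proof (rule dense_le_bounded[of "-1"])
  fix w :: ereal
  assume "-1 < w" "w < 0"
  then obtain r where r: "w = ereal r" "-1 < r" "r < 0"
    by (cases w) (auto simp: one_ereal_def)
  obtain \<tau> \<xi> where c: "c = (\<tau>, \<xi>)" and "Im \<tau> = 0" and real_\<xi>: "\<forall>j. Im (\<xi> $ j) = 0"
    using \<open>real_point c\<close> unfolding real_point_def by (cases c) auto
  define z where "z = (\<tau> - \<i> * of_real (r + 1), \<xi>)"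
  have "dist c z = r + 1"
    using r unfolding z_def c dist_norm by (simp add: norm_Pair norm_mult)
  with r have z: "z \<in> ball c 1"
    by simp
  have "r \<le> Im (\<sigma> z)"
    using P_o_root_Im_ge[OF \<open>norm \<omega> = 1\<close> real_\<xi>] assms(6) z \<open>Im \<tau> = 0\<close>
    unfolding z_def by fastforce
  with r z show "w \<le> (SUP z\<in>ball c 1. ereal (Im (\<sigma> z)))"
    by (metis SUP_upper2 ereal_less_eq(3))
qed simp

end
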